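(* Let $\mathcal{M}=\langle S,R_1,R_2,V\rangle$ and $\mathcal{M}'=\langle S',R_1',R_2',V'\rangle$ be bimodal models and let $f:S\to S'$ be a $\boxdot$-morphism from $\mathcal{M}$ to $\mathcal{M}'$. Then for all $x\in S$ and all $\phi\in\mathcal{L}(\boxdot)\cup\mathcal{L}(\boxplus)$, $\mathcal{M},x\vDash\phi\iff\mathcal{M}',f(x)\vDash\phi$.
   Context: Fix a nonempty set $\mathbf{P}$ of propositional variables. A bimodal model is $\langle S,R_1,R_2,V\rangle$ with $S$ nonempty, $R_1,R_2\subseteq S\times S$, $V:\mathbf{P}\to\mathcal{P}(S)$. Write $R_i(s)=\{t\mid sR_it\}$. $\mathcal{L}(\boxdot):\ \phi::=p\mid\neg\phi\mid(\phi\wedge\phi)\mid\boxdot\phi$ and $\mathcal{L}(\boxplus):\ \phi::=p\mid\neg\phi\mid(\phi\wedge\phi)\mid\boxplus\phi$. Truth: $\mathcal{M},s\vDash p$ iff $s\in V(p)$; Booleans as usual; $\mathcal{M},s\vDash\boxdot\phi$ iff for all $t,u$ with $sR_1t$ and $sR_2u$, ($\mathcal{M},t\vDash\phi\iff\mathcal{M},u\vDash\phi$); $\mathcal{M},s\vDash\boxplus\phi$ iff ($\mathcal{M},t\vDash\phi$ for all $t\in R_1(s)$) or ($\mathcal{M},u\vDash\neg\phi$ for all $u\in R_2(s)$). A function $f:S\to S'$ is a $\boxdot$-morphism from $\mathcal{M}$ to $\mathcal{M}'$ if for all $x\in S$: (Var) for all $p\in\mathbf{P}$, $x\in V(p)$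 iff $f(x)\in V'(p)$; (Forth) for all $y,z\in S$, if $xR_1y$, $xR_2z$ and $f(y)\neq f(z)$, then $f(x)R_1'f(y)$ and $f(x)R_2'f(z)$; (Back) for all $y',z'\in S'$, if $f(x)R_1'y'$, $f(x)R_2'z'$ and $y'\neq z'$, then there are $y,z\in S$ with $xR_1y$, $xR_2z$, $f(y)=y'$, $f(z)=z'$. *)

theory Defs
  imports Main
begin

(* Bimodal model <S,R1,R2,V>: the state set S is the (nonempty) universe of the type 's;
   propositional variables are the elements of the (nonempty) type 'p. *)
record ('s, 'p) bimodel =
  R1 :: "'s \<Rightarrow> 's \<Rightarrow> bool"
  R2 :: "'s \<Rightarrow> 's \<Rightarrow> bool"
  Val :: "'p \<Rightarrow> 's set"

datatype 'p fdot = DVar 'p | DNot "'p fdot" | DAnd "'p fdot" "'p fdot" | DBox "'p fdot"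
datatype 'p fplus = PVar 'p | PNot "'p fplus" | PAnd "'p fplus" "'p fplus" | PBox "'p fplus"

fun sat_dot :: "('s, 'p) bimodel \<Rightarrow> 's \<Rightarrow> 'p fdot \<Rightarrow> bool" where
  "sat_dot M s (DVar p) = (s \<in> Val M p)"
| "sat_dot M s (DNot \<phi>) = (\<not> sat_dot M s \<phi>)"
| "sat_dot M s (DAnd \<phi> \<psi>) = (sat_dot M s \<phi> \<and> sat_dot M s \<psi>)"
| "sat_dot M s (DBox \<phi>) =
     (\<forall>t u. R1 M s t \<longrightarrow> R2 M s u \<longrightarrow> (sat_dot M t \<phi> \<longleftrightarrow> sat_dot M u \<phi>))"

fun sat_plus :: "('s, 'p) bimodel \<Rightarrow> 's \<Rightarrow> 'p fplus \<Rightarrow> bool" where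
  "sat_plus M s (PVar p) = (s \<in> Val M p)"
| "sat_plus M s (PNot \<phi>) = (\<not> sat_plus M s \<phi>)"
| "sat_plus M s (PAnd \<phi> \<psi>) = (sat_plus M s \<phi> \<and> sat_plus M s \<psi>)"
| "sat_plus M s (PBox \<phi>) =
     ((\<forall>t. R1 M s t \<longrightarrow> sat_plus M t \<phi>) \<or> (\<forall>u. R2 M s u \<longrightarrow> \<not> sat_plus M u \<phi>))"

definition dot_morphism :: "('s, 'p) bimodel \<Rightarrow> ('s2, 'p) bimodel \<Rightarrow> ('s \<Rightarrow> 's2) \<Rightarrow> bool" where
  "dot_morphism M M' f \<longleftrightarrow>
     (\<forall>x. (\<forall>p. x \<in> Val M p \<longleftrightarrow> f x \<in> Val M' p)
        \<and> (\<forall>y z. R1 M x y \<longrightarrow> R2 M x z \<longrightarrow> f y \<noteq> f z \<longrightarrow> R1 M' (f x) (f y) \<and> R2 M' (f x) (f z))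
        \<and> (\<forall>y' z'. R1 M' (f x) y' \<longrightarrow> R2 M' (f x) z' \<longrightarrow> y' \<noteq> z' \<longrightarrow>
              (\<exists>y z. R1 M x y \<and> R2 M x z \<and> f y = y' \<and> f z = z')))"

end

theory Submission
  imports Defs
begin

(* Both boxes fail at a state exactly when some R1-successor and some R2-successor disagree
   on a formula in a prescribed way. Such disagreeing successors have distinct images, which is
   precisely the case governed by Forth and Back; hence, by induction on formulas, f transfers
   these disagreements in both directions and so preserves truth of both boxes. *)

lemma dot_morphism_split_successors_iff:
  assumes m: "dot_morphism M M' f"
    and inv: "\<And>y. P y \<longleftrightarrow> Q (f y)"
  shows "(\<exists>t u. R1 M x t \<and> R2 M x u \<and> P t \<and> \<not> P u)
     \<longleftrightarrow> (\<exists>t' u'. R1 M' (f x) t' \<and> R2 M' (f x) u' \<and> Q t' \<and> \<not> Q u')"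
proof
  assume "\<exists>t u. R1 M x t \<and> R2 M x u \<and> P t \<and> \<not> P u"
  then obtain t u where t: "R1 M x t" and u: "R2 M x u" and "P t" "\<not> P u" by blast
  then have "Q (f t)" "\<not> Q (f u)" using inv by auto
  moreover from this have "R1 M' (f x) (f t)" "R2 M' (f x) (f u)"
    using m t u unfolding dot_morphism_def by metis+
  ultimately show "\<exists>t' u'. R1 M' (f x) t' \<and> R2 M' (f x) u' \<and> Q t' \<and> \<not> Q u'" by blast
next
  assume "\<exists>t' u'. R1 M' (f x) t' \<and> R2 M' (f x) u' \<and> Q t' \<and> \<not> Q u'"
  then obtain t' u' where t': "R1 M' (f x) t'" and u': "R2 M' (f x) u'" and "Q t'" "\<not> Q u'"
    by blast
  then have "t' \<noteq> u'" by blast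
  then obtain t u where "R1 M x t" "R2 M x u" "f t = t'" "f u = u'"
    using m t' u' unfolding dot_morphism_def by blast
  with \<open>Q t'\<close> \<open>\<not> Q u'\<close> show "\<exists>t u. R1 M x t \<and> R2 M x u \<and> P t \<and> \<not> P u"
    using inv by blast
qed

lemma sat_dot_DBox_iff:
  "sat_dot M s (DBox \<phi>) \<longleftrightarrow>
     \<not> (\<exists>t u. R1 M s t \<and> R2 M s u \<and> sat_dot M t \<phi> \<and> \<not> sat_dot M u \<phi>)
   \<and> \<not> (\<exists>t u. R1 M s t \<and> R2 M s u \<and> \<not> sat_dot M t \<phi> \<and> \<not> \<not> sat_dot M u \<phi>)"
  by auto

lemma sat_plus_PBox_iff:
  "sat_plus M s (PBox \<phi>) \<longleftrightarrow>
     \<not> (\<exists>t u. R1 M s t \<and> R2 M s u \<and> \<not> sat_plus M t \<phi> \<and> \<not> \<not> sat_plus M u \<phi>)"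
  by auto

lemma dot_morphism_preserves_sat_dot:
  assumes m: "dot_morphism M M' f"
  shows "sat_dot M x \<phi> \<longleftrightarrow> sat_dot M' (f x) \<phi>"
proof (induction \<phi> arbitrary: x)
  case (DVar p)
  then show ?case using m by (simp add: dot_morphism_def)
next
  case (DBox \<phi>)
  have pos: "\<And>y. sat_dot M y \<phi> \<longleftrightarrow> sat_dot M' (f y) \<phi>"
    and neg: "\<And>y. \<not> sat_dot M y \<phi> \<longleftrightarrow> \<not> sat_dot M' (f y) \<phi>"
    using DBox.IH by auto
  show ?case
    unfolding sat_dot_DBox_iff
    using dot_morphism_split_successors_iff[OF m,
        where P = "\<lambda>y. sat_dot M y \<phi>" and Q = "\<lambda>y. sat_dot M' y \<phi>", OF pos]
      dot_morphism_split_successors_iff[OF m,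
        where P = "\<lambda>y. \<not> sat_dot M y \<phi>" and Q = "\<lambda>y. \<not> sat_dot M' y \<phi>", OF neg]
    by simp
qed simp_all

lemma dot_morphism_preserves_sat_plus:
  assumes m: "dot_morphism M M' f"
  shows "sat_plus M x \<phi> \<longleftrightarrow> sat_plus M' (f x) \<phi>"
proof (induction \<phi> arbitrary: x)
  case (PVar p)
  then show ?case using m by (simp add: dot_morphism_def)
next
  case (PBox \<phi>)
  have "\<And>y. \<not> sat_plus M y \<phi> \<longleftrightarrow> \<not> sat_plus M' (f y) \<phi>"
    using PBox.IH by auto
  from dot_morphism_split_successors_iff[OF m,
      where P = "\<lambda>y. \<not> sat_plus M y \<phi>" and Q = "\<lambda>y. \<not> sat_plus M' y \<phi>", OF this]
  show ?case
    unfolding sat_plus_PBox_iff by simp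
qed simp_all

theorem proposition4p2:
  fixes M :: "('s, 'p) bimodel" and M' :: "('s2, 'p) bimodel" and f :: "'s \<Rightarrow> 's2"
  assumes "dot_morphism M M' f"
  shows "(\<forall>x (\<phi>::'p fdot). sat_dot M x \<phi> \<longleftrightarrow> sat_dot M' (f x) \<phi>)
       \<and> (\<forall>x (\<phi>::'p fplus). sat_plus M x \<phi> \<longleftrightarrow> sat_plus M' (f x) \<phi>)"
  using dot_morphism_preserves_sat_dot[OF assms] dot_morphism_preserves_sat_plus[OF assms]
  by blast

end
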